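(* Let $\beta$ be any partition, with conjugate $\beta' = (\beta'_1,\beta'_2,\dots)$, and let $k \geq \beta'_1$ (that is, $k$ is at least the number of parts of $\beta$). Let $\lambda = (k, \beta'_1, \beta'_2, \dots)$, a partition of $k+|\beta|$. Then $$s_\beta(1,q,\dots,q^{k-1}) = q^{-\binom{|\beta|+1}{2}} f_{\lambda,|\beta|}(q),$$ i.e. the principal specialization $s_\beta(1,q,\dots,q^{k-1})$ is, up to a power of $q$, the distribution of the major index over all standard Young tableaux of shape $\lambda$ having the maximum possible number $|\beta|$ of descents.
   Context: For a partition $\lambda\vdash N$, a standard Young tableau of shape $\lambda$ is a filling of the Ferrers diagram with $1,\dots,N$, increasing along rows and down columns; it has a descent at $m$ if $m+1$ lies in a strictly lower row than $m$; $\mathrm{des}$ is the number of descents and $\mathrm{maj}$ their sum. $f_{\lambda,i}(q)=\sum q^{\mathrm{maj}(\tau)}$ over standard Young tableaux of shape $\lambda$ with $\mathrm{des}(\tau)=i$. The conjugate $\beta'$ has $\beta'_c$ equal to the number of parts of $\beta$ that are $\ge c$. $s_\beta(x_1,\dots,x_m)$ is the Schur polynomial, the sum of $x^T$ over semistandard Young tableaux $T$ of shape $\beta$ with entries in $\{1,\dots,m\}$. *)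

theory Defs
  imports Main
begin

text \<open>Partitions are lists of positive naturals in weakly decreasing order.
  Cells of the Ferrers diagram are 0-indexed pairs (row, column).\<close>

definition is_partition :: "nat list \<Rightarrow> bool" where
  "is_partition \<beta> \<longleftrightarrow> sorted_wrt (\<ge>) \<beta> \<and> (\<forall>p\<in>set \<beta>. 0 < p)"

definition psize :: "nat list \<Rightarrow> nat" where
  "psize \<beta> = sum_list \<beta>"

definition conjugate :: "nat list \<Rightarrow> nat list" where
  "conjugate \<beta> = map (\<lambda>c. length (filter (\<lambda>p. c \<le> p) \<beta>)) [1..<Suc (Max (insert 0 (set \<beta>)))]"

definition cells :: "nat list \<Rightarrow> (nat \<times> nat) set" where
  "cells sh = {(i, j). i < length sh \<and> j < sh ! i}"

definition SYT :: "nat list \<Rightarrow> (nat \<times> nat \<Rightarrow> nat) set" where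
  "SYT sh = {T. bij_betw T (cells sh) {1..sum_list sh}
     \<and> (\<forall>i j. (i, j + 1) \<in> cells sh \<longrightarrow> T (i, j) < T (i, j + 1))
     \<and> (\<forall>i j. (i + 1, j) \<in> cells sh \<longrightarrow> T (i, j) < T (i + 1, j))
     \<and> (\<forall>c. c \<notin> cells sh \<longrightarrow> T c = 0)}"

definition descents :: "nat list \<Rightarrow> (nat \<times> nat \<Rightarrow> nat) \<Rightarrow> nat set" where
  "descents sh T = {m. 1 \<le> m \<and> m < sum_list sh \<and>
     (\<exists>i j i' j'. (i, j) \<in> cells sh \<and> T (i, j) = m \<and> (i', j') \<in> cells sh \<and> T (i', j') = m + 1 \<and> i < i')}"

definition des :: "nat list \<Rightarrow> (nat \<times> nat \<Rightarrow> nat) \<Rightarrow> nat" where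
  "des sh T = card (descents sh T)"

definition maj :: "nat list \<Rightarrow> (nat \<times> nat \<Rightarrow> nat) \<Rightarrow> nat" where
  "maj sh T = \<Sum>(descents sh T)"

definition f_des :: "nat list \<Rightarrow> nat \<Rightarrow> 'a::comm_ring_1 \<Rightarrow> 'a" where
  "f_des sh d q = (\<Sum>T\<in>{T\<in>SYT sh. des sh T = d}. q ^ maj sh T)"

definition SSYT :: "nat list \<Rightarrow> nat \<Rightarrow> (nat \<times> nat \<Rightarrow> nat) set" where
  "SSYT \<beta> m = {T. (\<forall>c\<in>cells \<beta>. T c \<in> {1..m})
     \<and> (\<forall>i j. (i, j + 1) \<in> cells \<beta> \<longrightarrow> T (i, j) \<le> T (i, j + 1))
     \<and> (\<forall>i j. (i + 1, j) \<in> cells \<beta> \<longrightarrow> T (i, j) < T (i + 1, j))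
     \<and> (\<forall>c. c \<notin> cells \<beta> \<longrightarrow> T c = 0)}"

definition schur :: "nat list \<Rightarrow> nat \<Rightarrow> (nat \<Rightarrow> 'a::comm_ring_1) \<Rightarrow> 'a" where
  "schur \<beta> m x = (\<Sum>T\<in>SSYT \<beta> m. \<Prod>c\<in>cells \<beta>. x (T c))"

end

theory Submission
  imports Defs "HOL-Library.Product_Lexorder"
begin

text \<open>Write \<lambda> = (k, \<beta>'), whose row s+1 is the transpose of column s of \<beta>.  Given a
  semistandard tableau P of shape \<beta> with entries at most k, give the first-row cell j of \<lambda>
  the entry j+1 and the cell (s+1, i) the entry P(i, s), and number the cells of \<lambda> by increasing
  entry, breaking ties by the row.  This is a standard tableau in which m is a descent exactly when
  m+1 lies below the first row, so it has the maximal number |\<beta>| of descents.  Its first-row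
  labels are j + 1 + #{w. P w \<le> j}; the remaining labels minus one form the descent set, and
  summing gives maj = binom(|\<beta>|+1, 2) + \<Sum>w (P w - 1).  Conversely, in a standard tableau with
  |\<beta>| descents every label between two consecutive first-row labels is a descent, so the cells
  carrying them lie in strictly increasing rows; hence P is recovered as P(i, s) = number of
  first-row labels smaller than the label of (s+1, i), and the map is a bijection.\<close>

section \<open>Cells of partitions and tableaux\<close>

lemma finite_cells: "finite (cells sh)"
proof -
  have "cells sh = (SIGMA i:{..<length sh}. {..<sh ! i})" by (auto simp: cells_def)
  then show ?thesis by simp
qed

lemma card_cells: "card (cells sh) = sum_list sh"
proof -
  have "cells sh = (SIGMA i:{..<length sh}. {..<sh ! i})" by (auto simp: cells_def)
  then show ?thesis by (simp add: sum_list_sum_nth atLeast0LessThan)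
qed

lemma cells_Cons_0 [simp]: "(0, j) \<in> cells (k # sh) \<longleftrightarrow> j < k"
  by (simp add: cells_def)

lemma cells_Cons_Suc [simp]: "(Suc i, j) \<in> cells (k # sh) \<longleftrightarrow> (i, j) \<in> cells sh"
  by (simp add: cells_def)

lemma partition_cells_downward_closed:
  assumes "is_partition \<beta>" "(i, j) \<in> cells \<beta>" "i' \<le> i" "j' \<le> j"
  shows "(i', j') \<in> cells \<beta>"
proof -
  have "\<beta> ! i \<le> \<beta> ! i'"
    using assms by (cases "i' = i") (auto simp: cells_def is_partition_def sorted_wrt_iff_nth_less)
  then show ?thesis using assms(2-4) by (auto simp: cells_def)
qed

lemma length_filter_ge_less_iff:
  assumes "sorted_wrt (\<ge>) (xs :: nat list)"
  shows "i < length (filter (\<lambda>p. c \<le> p) xs) \<longleftrightarrow> i < length xs \<and> c \<le> xs ! i"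
  using assms
proof (induction xs arbitrary: i)
  case (Cons a xs)
  show ?case
  proof (cases "c \<le> a")
    case True
    then show ?thesis using Cons by (cases i) auto
  next
    case False
    then have "filter (\<lambda>p. c \<le> p) xs = []" using Cons.prems by (auto simp: filter_empty_conv)
    then show ?thesis using False Cons.prems by (cases i) (auto, meson le_trans nth_mem)
  qed
qed simp

lemma cells_conjugate:
  assumes "is_partition \<beta>"
  shows "(j, i) \<in> cells (conjugate \<beta>) \<longleftrightarrow> (i, j) \<in> cells \<beta>"
proof -
  have sorted: "sorted_wrt (\<ge>) \<beta>" using assms by (simp add: is_partition_def)
  let ?M = "Max (insert 0 (set \<beta>))"
  have len: "length (conjugate \<beta>) = ?M" by (simp add: conjugate_def)
  have nth: "j < ?M \<Longrightarrow> conjugate \<beta> ! j = length (filter (\<lambda>p. Suc j \<le> p) \<beta>)"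
    unfolding conjugate_def by (simp del: upt_Suc)
  have "(i, j) \<in> cells \<beta> \<Longrightarrow> j < ?M"
    by (rule less_le_trans[of _ "\<beta> ! i"]) (auto simp: cells_def)
  then show ?thesis using nth length_filter_ge_less_iff[OF sorted] by (auto simp: cells_def len)
qed

lemma sum_list_conjugate:
  assumes "is_partition \<beta>"
  shows "sum_list (conjugate \<beta>) = psize \<beta>"
proof -
  have "cells (conjugate \<beta>) = prod.swap ` cells \<beta>"
    using cells_conjugate[OF assms] by force
  then have "card (cells (conjugate \<beta>)) = card (cells \<beta>)"
    by (simp add: card_image)
  then show ?thesis by (simp add: card_cells psize_def)
qed

lemma SSYT_col_less:
  assumes "is_partition \<beta>" "P \<in> SSYT \<beta> m" "(i', j) \<in> cells \<beta>" "i < i'"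
  shows "P (i, j) < P (i', j)"
  using assms(3,4)
proof (induction i')
  case (Suc i')
  have "(i', j) \<in> cells \<beta>" using partition_cells_downward_closed[OF assms(1) Suc.prems(1)] by simp
  moreover have "P (i', j) < P (Suc i', j)" using assms(2) Suc.prems(1) by (auto simp: SSYT_def)
  ultimately show ?case using Suc by (cases "i = i'") auto
qed simp

lemma SSYT_row_less_entry:
  assumes "is_partition \<beta>" "P \<in> SSYT \<beta> m" "(i, j) \<in> cells \<beta>"
  shows "i < P (i, j)"
  using assms(3)
proof (induction i)
  case 0
  then show ?case using assms(2) by (fastforce simp: SSYT_def)
next
  case (Suc i)
  have "(i, j) \<in> cells \<beta>" using partition_cells_downward_closed[OF assms(1) Suc.prems] by simp
  then show ?case using Suc SSYT_col_less[OF assms(1,2) Suc.prems, of i] by simp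
qed

lemma SYT_inj_on: "T \<in> SYT sh \<Longrightarrow> inj_on T (cells sh)"
  by (simp add: SYT_def bij_betw_def)

lemma SYT_label_range: "T \<in> SYT sh \<Longrightarrow> x \<in> cells sh \<Longrightarrow> T x \<in> {1..sum_list sh}"
  unfolding SYT_def by (blast intro: bij_betw_apply)

lemma SYT_outside: "T \<in> SYT sh \<Longrightarrow> x \<notin> cells sh \<Longrightarrow> T x = 0"
  unfolding SYT_def by blast

lemma SYT_col_less_Suc: "T \<in> SYT sh \<Longrightarrow> (Suc i, j) \<in> cells sh \<Longrightarrow> T (i, j) < T (Suc i, j)"
  by (simp add: SYT_def)

lemma SYT_row_less:
  assumes "T \<in> SYT sh" "(i, j') \<in> cells sh" "j < j'"
  shows "T (i, j) < T (i, j')"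
  using assms(2,3)
proof (induction j')
  case (Suc j')
  have "(i, j') \<in> cells sh" using Suc.prems(1) by (auto simp: cells_def)
  moreover have "T (i, j') < T (i, Suc j')" using assms(1) Suc.prems(1) by (simp add: SYT_def)
  ultimately show ?case using Suc by (cases "j = j'") auto
qed simp

lemma descent_run_row_less:
  assumes inj: "inj_on T (cells sh)" and x: "x \<in> cells sh"
  shows "y \<in> cells sh \<Longrightarrow> T x < T y \<Longrightarrow>
    (\<And>m. T x \<le> m \<Longrightarrow> m < T y \<Longrightarrow> m \<in> descents sh T) \<Longrightarrow> fst x < fst y"
proof (induction "T y" arbitrary: y rule: less_induct)
  case less
  have "T y - 1 \<in> descents sh T" using less.prems by simp
  then obtain i j i' j' where d: "(i, j) \<in> cells sh" "T (i, j) = T y - 1"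
      "(i', j') \<in> cells sh" "T (i', j') = T y - 1 + 1" "i < i'"
    unfolding descents_def by blast
  have "(i', j') = y" using inj_onD[OF inj _ d(3) less.prems(1)] d(4) less.prems(2) by simp
  moreover have "fst x \<le> i"
  proof (cases "T (i, j) = T x")
    case True
    then show ?thesis using inj_onD[OF inj _ d(1) x] by auto
  next
    case False
    then have "T x < T (i, j)" using d(2) less.prems(2) by simp
    then show ?thesis using less.hyps[of "(i, j)"] d(1,2) less.prems by fastforce
  qed
  ultimately show ?case using d(5) by auto
qed

section \<open>Ranks and sums\<close>

lemma card_less_rank_mono:
  fixes key :: "'a \<Rightarrow> 'b::linorder"
  assumes "finite X" "x \<in> X" "key x < key y"
  shows "card {z\<in>X. key z < key x} < card {z\<in>X. key z < key y}"
proof (rule psubset_card_mono)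
  show "finite {z\<in>X. key z < key y}" using assms by simp
  show "{z\<in>X. key z < key x} \<subset> {z\<in>X. key z < key y}"
    using assms(2,3) by (auto intro: less_trans)
qed

lemma card_less_rank_less_iff:
  fixes key :: "'a \<Rightarrow> 'b::linorder"
  assumes "finite X" "inj_on key X" "x \<in> X" "y \<in> X"
  shows "card {z\<in>X. key z < key x} < card {z\<in>X. key z < key y} \<longleftrightarrow> key x < key y"
proof
  assume "key x < key y"
  then show "card {z\<in>X. key z < key x} < card {z\<in>X. key z < key y}"
    by (rule card_less_rank_mono[OF assms(1,3)])
next
  assume less: "card {z\<in>X. key z < key x} < card {z\<in>X. key z < key y}"
  show "key x < key y"
  proof (cases "key y < key x")
    case True
    then show ?thesis using card_less_rank_mono[OF assms(1,4) True] less by simp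
  next
    case False
    moreover have "key x \<noteq> key y" using less by auto
    ultimately show ?thesis by simp
  qed
qed

lemma bij_betw_card_less_rank:
  fixes key :: "'a \<Rightarrow> 'b::linorder"
  assumes "finite X" "inj_on key X"
  shows "bij_betw (\<lambda>x. Suc (card {z\<in>X. key z < key x})) X {1..card X}"
proof -
  let ?r = "\<lambda>x. Suc (card {z\<in>X. key z < key x})"
  have inj: "inj_on ?r X"
  proof (rule inj_onI)
    fix x y assume xy: "x \<in> X" "y \<in> X" "?r x = ?r y"
    then have "\<not> key x < key y" "\<not> key y < key x"
      using card_less_rank_less_iff[OF assms xy(1,2)] card_less_rank_less_iff[OF assms xy(2,1)]
      by auto
    then show "x = y" using inj_onD[OF assms(2) _ xy(1,2)] by auto
  qed
  have "?r ` X \<subseteq> {1..card X}"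
  proof
    fix v assume "v \<in> ?r ` X"
    then obtain x where x: "x \<in> X" "v = ?r x" by auto
    have "card {z\<in>X. key z < key x} < card X"
      using x assms(1) by (intro psubset_card_mono) auto
    then show "v \<in> {1..card X}" using x by auto
  qed
  moreover have "card (?r ` X) = card {1..card X}" using card_image[OF inj] by simp
  ultimately have "?r ` X = {1..card X}" by (intro card_subset_eq) auto
  then show ?thesis using inj by (simp add: bij_betw_def)
qed

lemma card_less_label:
  assumes bij: "bij_betw T X {1..card X}" and x: "x \<in> X"
  shows "card {z\<in>X. T z < T x} = T x - 1"
proof -
  have "T ` {z\<in>X. T z < T x} = {1..<T x}"
  proof
    show "T ` {z\<in>X. T z < T x} \<subseteq> {1..<T x}"
      using bij_betw_apply[OF bij] by force
    show "{1..<T x} \<subseteq> T ` {z\<in>X. T z < T x}"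
    proof
      fix v assume v: "v \<in> {1..<T x}"
      then have "v \<in> T ` X" using bij_betw_apply[OF bij x] bij_betw_imp_surj_on[OF bij] by auto
      then show "v \<in> T ` {z\<in>X. T z < T x}" using v by auto
    qed
  qed
  moreover have "inj_on T {z\<in>X. T z < T x}"
    using bij_betw_imp_inj_on[OF bij] by (rule inj_on_subset) auto
  ultimately show ?thesis by (metis card_atLeastLessThan card_image)
qed

lemma sum_card_le_eq_sum_diff:
  fixes P :: "'a \<Rightarrow> nat"
  assumes "finite A"
  shows "(\<Sum>c<k. card {w\<in>A. P w \<le> c}) = (\<Sum>w\<in>A. k - P w)"
proof -
  have "(\<Sum>c<k. card {w\<in>A. P w \<le> c}) = (\<Sum>c<k. \<Sum>w\<in>A. if P w \<le> c then 1 else 0)"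
    using assms by (simp add: sum.If_cases Int_def conj_commute)
  also have "\<dots> = (\<Sum>w\<in>A. \<Sum>c<k. if P w \<le> c then 1 else 0)" by (rule sum.swap)
  also have "\<dots> = (\<Sum>w\<in>A. k - P w)"
  proof (rule sum.cong)
    fix w
    have "{c\<in>{..<k}. P w \<le> c} = {P w..<k}" by auto
    then show "(\<Sum>c<k. if P w \<le> c then 1 else 0) = k - P w"
      by (simp add: sum.If_cases Int_def conj_commute)
  qed simp
  finally show ?thesis .
qed

lemma sum_complement_plus_sum_pred:
  fixes P :: "'a \<Rightarrow> nat"
  assumes "\<And>w. w \<in> A \<Longrightarrow> 1 \<le> P w \<and> P w \<le> k"
  shows "(\<Sum>w\<in>A. k - P w) + (\<Sum>w\<in>A. P w - 1) + card A = card A * k"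
proof -
  have "(\<Sum>w\<in>A. k - P w + (P w - 1) + 1) = (\<Sum>w\<in>A. k)"
    using assms by (intro sum.cong) fastforce+
  then show ?thesis by (simp add: sum.distrib sum_Suc)
qed

lemma sum_lessThan_add_nat: "(\<Sum>i<k + b. i) = (\<Sum>i<k. i) + b * k + (\<Sum>i<b. i :: nat)"
  by (induction b) simp_all

lemma sum_lessThan_plus_eq_Suc_choose_two: "(\<Sum>i<b. i) + b = Suc b choose 2"
  by (induction b) (simp_all add: numeral_2_eq_2)

section \<open>Descents and the first row\<close>

definition first_row :: "nat \<Rightarrow> (nat \<times> nat) set" where
  "first_row k = (\<lambda>j. (0, j)) ` {..<k}"

text \<open>Since the first row is the top row, m can only be a descent of a standard tableau if m+1
  lies below the first row.  Hence des is at most the number of cells below the first row, with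
  equality exactly when every such m is a descent.\<close>

definition possible_descents :: "nat \<Rightarrow> nat \<Rightarrow> (nat \<times> nat \<Rightarrow> nat) \<Rightarrow> nat set" where
  "possible_descents k N T = {m. 1 \<le> m \<and> m < N \<and> m + 1 \<notin> T ` first_row k}"

lemma descents_subset_possible_descents:
  assumes "inj_on T (cells (k # sh))"
  shows "descents (k # sh) T \<subseteq> possible_descents k (sum_list (k # sh)) T"
proof
  fix m assume "m \<in> descents (k # sh) T"
  then obtain i j i' j' where d: "1 \<le> m" "m < sum_list (k # sh)"
      "(i', j') \<in> cells (k # sh)" "T (i', j') = m + 1" "i < i'"
    unfolding descents_def by blast
  have "m + 1 \<notin> T ` first_row k"
  proof
    assume "m + 1 \<in> T ` first_row k"
    then obtain j where "j < k" "T (0, j) = m + 1" by (auto simp: first_row_def)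
    then have "(0, j) = (i', j')" using inj_onD[OF assms _ _ d(3)] d(4) by simp
    then show False using d(5) by simp
  qed
  then show "m \<in> possible_descents k (sum_list (k # sh)) T"
    using d(1,2) by (simp add: possible_descents_def)
qed

lemma SYT_first_row_pred:
  assumes "T \<in> SYT (k # sh)"
  shows "inj_on (\<lambda>j. T (0, j) - 1) {..<k}"
    and "(\<lambda>j. T (0, j) - 1) ` {..<k} \<subseteq> {..<sum_list (k # sh)}"
proof -
  have range: "j < k \<Longrightarrow> T (0, j) \<in> {1..sum_list (k # sh)}" for j
    using SYT_label_range[OF assms] by simp
  show "inj_on (\<lambda>j. T (0, j) - 1) {..<k}"
  proof (rule inj_onI)
    fix j j' assume jj: "j \<in> {..<k}" "j' \<in> {..<k}" "T (0, j) - 1 = T (0, j') - 1"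
    then have "T (0, j) = T (0, j')" using range[of j] range[of j'] by auto
    then show "j = j'" using inj_onD[OF SYT_inj_on[OF assms], of "(0, j)" "(0, j')"] jj(1,2) by simp
  qed
  show "(\<lambda>j. T (0, j) - 1) ` {..<k} \<subseteq> {..<sum_list (k # sh)}"
    using range by fastforce
qed

lemma possible_descents_subset:
  assumes "T \<in> SYT (k # sh)"
  shows "possible_descents k (sum_list (k # sh)) T
    \<subseteq> {..<sum_list (k # sh)} - (\<lambda>j. T (0, j) - 1) ` {..<k}"
proof -
  have "T (0, j) \<ge> 1" if "j < k" for j
    using SYT_label_range[OF assms, of "(0, j)"] that by simp
  then show ?thesis by (force simp: possible_descents_def first_row_def)
qed

lemma possible_descents_eq:
  assumes "T \<in> SYT (k # sh)" "T (0, 0) = 1"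
  shows "possible_descents k (sum_list (k # sh)) T
    = {..<sum_list (k # sh)} - (\<lambda>j. T (0, j) - 1) ` {..<k}"
proof
  have "0 < k" using SYT_outside[OF assms(1), of "(0, 0)"] assms(2) by (cases k) auto
  show "{..<sum_list (k # sh)} - (\<lambda>j. T (0, j) - 1) ` {..<k}
      \<subseteq> possible_descents k (sum_list (k # sh)) T"
  proof
    fix m assume m: "m \<in> {..<sum_list (k # sh)} - (\<lambda>j. T (0, j) - 1) ` {..<k}"
    have "0 \<in> (\<lambda>j. T (0, j) - 1) ` {..<k}" using assms(2) \<open>0 < k\<close> by force
    then have "m \<noteq> 0" using m by auto
    then show "m \<in> possible_descents k (sum_list (k # sh)) T"
      using m by (force simp: possible_descents_def first_row_def)
  qed
qed (rule possible_descents_subset[OF assms(1)])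

lemma card_possible_descents_le:
  assumes "T \<in> SYT (k # sh)"
  shows "card (possible_descents k (sum_list (k # sh)) T) \<le> sum_list sh"
proof -
  note pred = SYT_first_row_pred[OF assms]
  have "card (possible_descents k (sum_list (k # sh)) T)
      \<le> card ({..<sum_list (k # sh)} - (\<lambda>j. T (0, j) - 1) ` {..<k})"
    by (rule card_mono[OF _ possible_descents_subset[OF assms]]) simp
  also have "\<dots> = sum_list sh"
    using card_Diff_subset[OF _ pred(2)] card_image[OF pred(1)] by simp
  finally show ?thesis .
qed

lemma descents_eq_possible_descents:
  assumes "T \<in> SYT (k # sh)" "des (k # sh) T = sum_list sh"
  shows "descents (k # sh) T = possible_descents k (sum_list (k # sh)) T"
proof (rule card_subset_eq)
  show fin: "finite (possible_descents k (sum_list (k # sh)) T)"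
    by (simp add: possible_descents_def)
  show sub: "descents (k # sh) T \<subseteq> possible_descents k (sum_list (k # sh)) T"
    by (rule descents_subset_possible_descents[OF SYT_inj_on[OF assms(1)]])
  show "card (descents (k # sh) T) = card (possible_descents k (sum_list (k # sh)) T)"
    using card_mono[OF fin sub] card_possible_descents_le[OF assms(1)] assms(2)[unfolded des_def]
    by linarith
qed

lemma des_maj_eq_possible_descents:
  assumes "T \<in> SYT (k # sh)" "T (0, 0) = 1"
    and "descents (k # sh) T = possible_descents k (sum_list (k # sh)) T"
  shows "des (k # sh) T = sum_list sh"
    and "maj (k # sh) T + (\<Sum>j<k. T (0, j) - 1) = \<Sum>{..<sum_list (k # sh)}"
proof -
  note pred = SYT_first_row_pred[OF assms(1)]
  have desc: "descents (k # sh) T = {..<sum_list (k # sh)} - (\<lambda>j. T (0, j) - 1) ` {..<k}"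
    using assms(3) possible_descents_eq[OF assms(1,2)] by simp
  show "des (k # sh) T = sum_list sh"
    unfolding des_def desc using card_Diff_subset[OF _ pred(2)] card_image[OF pred(1)] by simp
  show "maj (k # sh) T + (\<Sum>j<k. T (0, j) - 1) = \<Sum>{..<sum_list (k # sh)}"
    unfolding maj_def desc
    using sum.subset_diff[OF pred(2), where g = "\<lambda>m. m"] sum.reindex[OF pred(1), where g = "\<lambda>m. m"]
    by simp
qed

section \<open>The bijection\<close>

definition cell_key :: "(nat \<times> nat \<Rightarrow> nat) \<Rightarrow> nat \<times> nat \<Rightarrow> nat \<times> nat" where
  "cell_key P x = ((case x of (0, j) \<Rightarrow> Suc j | (Suc s, i) \<Rightarrow> P (i, s)), fst x)"

definition syt_of_ssyt :: "nat list \<Rightarrow> nat \<Rightarrow> (nat \<times> nat \<Rightarrow> nat) \<Rightarrow> nat \<times> nat \<Rightarrow> nat" where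
  "syt_of_ssyt \<beta> k P x = (if x \<in> cells (k # conjugate \<beta>)
     then Suc (card {y\<in>cells (k # conjugate \<beta>). cell_key P y < cell_key P x}) else 0)"

definition ssyt_of_syt :: "nat list \<Rightarrow> nat \<Rightarrow> (nat \<times> nat \<Rightarrow> nat) \<Rightarrow> nat \<times> nat \<Rightarrow> nat" where
  "ssyt_of_syt \<beta> k T x = (if x \<in> cells \<beta>
     then card {j. j < k \<and> T (0, j) < T (Suc (snd x), fst x)} else 0)"

lemma cell_key_0 [simp]: "cell_key P (0, j) = (Suc j, 0)"
  by (simp add: cell_key_def)

lemma cell_key_Suc [simp]: "cell_key P (Suc s, i) = (P (i, s), Suc s)"
  by (simp add: cell_key_def)

lemma snd_cell_key: "snd (cell_key P x) = fst x"
  by (simp add: cell_key_def)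

locale bounded_partition =
  fixes \<beta> :: "nat list" and k :: nat
  assumes partition: "is_partition \<beta>" and length_le: "length \<beta> \<le> k"
begin

abbreviation shape :: "nat list" where "shape \<equiv> k # conjugate \<beta>"

lemmas cells_conjugate_partition [simp] = cells_conjugate[OF partition]

lemma cells_shapeE:
  assumes "x \<in> cells shape"
  obtains (first_row) j where "x = (0, j)" "j < k"
    | (transposed) s i where "x = (Suc s, i)" "(i, s) \<in> cells \<beta>"
  using assms by (metis cells_Cons_0 cells_Cons_Suc cells_conjugate_partition not0_implies_Suc prod.collapse)

lemma row_less_k: "(i, j) \<in> cells \<beta> \<Longrightarrow> i < k"
  using length_le by (auto simp: cells_def)

lemma sum_list_shape: "sum_list shape = k + psize \<beta>"
  by (simp add: sum_list_conjugate[OF partition])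

lemma SSYT_entry_range: "P \<in> SSYT \<beta> k \<Longrightarrow> w \<in> cells \<beta> \<Longrightarrow> 1 \<le> P w \<and> P w \<le> k"
  by (auto simp: SSYT_def)

lemma inj_on_cell_key:
  assumes P: "P \<in> SSYT \<beta> k"
  shows "inj_on (cell_key P) (cells shape)"
proof (rule inj_onI)
  fix x y assume x: "x \<in> cells shape" and y: "y \<in> cells shape" and eq: "cell_key P x = cell_key P y"
  from x show "x = y"
  proof (cases rule: cells_shapeE)
    case (first_row j)
    then show ?thesis using y eq by (cases rule: cells_shapeE[OF y]) auto
  next
    case (transposed s i)
    then obtain i' where y': "y = (Suc s, i')" "(i', s) \<in> cells \<beta>" "P (i, s) = P (i', s)"
      using y eq by (cases rule: cells_shapeE[OF y]) auto
    have "\<not> i < i'" "\<not> i' < i"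
      using SSYT_col_less[OF partition P y'(2), of i] SSYT_col_less[OF partition P transposed(2), of i']
        y'(3) by auto
    then show ?thesis using transposed(1) y'(1) by simp
  qed
qed

lemma syt_of_ssyt_less_iff:
  assumes "P \<in> SSYT \<beta> k" "x \<in> cells shape" "y \<in> cells shape"
  shows "syt_of_ssyt \<beta> k P x < syt_of_ssyt \<beta> k P y \<longleftrightarrow> cell_key P x < cell_key P y"
  using card_less_rank_less_iff[OF finite_cells inj_on_cell_key[OF assms(1)] assms(2,3)] assms(2,3)
  by (simp add: syt_of_ssyt_def)

lemma bij_betw_syt_of_ssyt:
  assumes "P \<in> SSYT \<beta> k"
  shows "bij_betw (syt_of_ssyt \<beta> k P) (cells shape) {1..sum_list shape}"
proof -
  have "bij_betw (\<lambda>x. Suc (card {y\<in>cells shape. cell_key P y < cell_key P x}))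
      (cells shape) {1..card (cells shape)}"
    by (rule bij_betw_card_less_rank[OF finite_cells inj_on_cell_key[OF assms]])
  then show ?thesis unfolding card_cells
    by (rule bij_betw_cong[THEN iffD1, rotated]) (simp add: syt_of_ssyt_def)
qed

lemma syt_of_ssyt_SYT:
  assumes P: "P \<in> SSYT \<beta> k"
  shows "syt_of_ssyt \<beta> k P \<in> SYT shape"
  unfolding SYT_def
proof (intro CollectI conjI allI impI)
  fix i j assume cell: "(i, j + 1) \<in> cells shape"
  then have "(i, j) \<in> cells shape" by (auto simp: cells_def)
  moreover have "cell_key P (i, j) < cell_key P (i, j + 1)"
    using cell SSYT_col_less[OF partition P] by (cases i) auto
  ultimately show "syt_of_ssyt \<beta> k P (i, j) < syt_of_ssyt \<beta> k P (i, j + 1)"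
    using syt_of_ssyt_less_iff[OF P _ cell] by simp
next
  fix i j assume cell: "(i + 1, j) \<in> cells shape"
  then have ji: "(j, i) \<in> cells \<beta>" by simp
  have "(i, j) \<in> cells shape"
    using ji row_less_k partition_cells_downward_closed[OF partition ji]
    by (cases i) auto
  moreover have "cell_key P (i, j) < cell_key P (i + 1, j)"
  proof (cases i)
    case 0
    then show ?thesis using SSYT_row_less_entry[OF partition P ji] by simp
  next
    case (Suc s)
    then have "P (j, s) \<le> P (j, Suc s)" using P ji by (simp add: SSYT_def)
    then show ?thesis using Suc by simp
  qed
  ultimately show "syt_of_ssyt \<beta> k P (i, j) < syt_of_ssyt \<beta> k P (i + 1, j)"
    using syt_of_ssyt_less_iff[OF P _ cell] by simp
next
  show "bij_betw (syt_of_ssyt \<beta> k P) (cells shape) {1..sum_list shape}"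
    by (rule bij_betw_syt_of_ssyt[OF P])
next
  fix c assume "c \<notin> cells shape"
  then show "syt_of_ssyt \<beta> k P c = 0" by (simp add: syt_of_ssyt_def)
qed

lemma syt_of_ssyt_first_row:
  assumes P: "P \<in> SSYT \<beta> k" and j: "j < k"
  shows "syt_of_ssyt \<beta> k P (0, j) = Suc (j + card {w\<in>cells \<beta>. P w \<le> j})"
proof -
  have "{y\<in>cells shape. cell_key P y < cell_key P (0, j)}
      = (\<lambda>j'. (0, j')) ` {..<j} \<union> (\<lambda>(i, s). (Suc s, i)) ` {w\<in>cells \<beta>. P w \<le> j}"
  proof (rule set_eqI)
    fix y :: "nat \<times> nat"
    show "y \<in> {y\<in>cells shape. cell_key P y < cell_key P (0, j)}
      \<longleftrightarrow> y \<in> (\<lambda>j'. (0, j')) ` {..<j} \<union> (\<lambda>(i, s). (Suc s, i)) ` {w\<in>cells \<beta>. P w \<le> j}"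
      using j by (cases y) (auto simp: less_prod_def cell_key_def image_iff split: nat.splits)
  qed
  moreover have "card ((\<lambda>j'. (0, j')) ` {..<j} \<union> (\<lambda>(i, s). (Suc s, i)) ` {w\<in>cells \<beta>. P w \<le> j})
      = card ((\<lambda>j'. (0::nat, j')) ` {..<j}) + card ((\<lambda>(i, s). (Suc s, i)) ` {w\<in>cells \<beta>. P w \<le> j})"
    by (intro card_Un_disjoint) (auto simp: finite_cells)
  moreover have "card ((\<lambda>j'. (0::nat, j')) ` {..<j}) = j"
    by (simp add: card_image inj_on_def)
  moreover have "card ((\<lambda>(i, s). (Suc s, i)) ` {w\<in>cells \<beta>. P w \<le> j}) = card {w\<in>cells \<beta>. P w \<le> j}"
    by (rule card_image) (auto simp: inj_on_def)
  ultimately show ?thesis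
    using j by (simp add: syt_of_ssyt_def)
qed

lemma possible_descents_subset_descents_syt_of_ssyt:
  assumes P: "P \<in> SSYT \<beta> k"
  shows "possible_descents k (sum_list shape) (syt_of_ssyt \<beta> k P) \<subseteq> descents shape (syt_of_ssyt \<beta> k P)"
proof
  let ?T = "syt_of_ssyt \<beta> k P"
  have bij: "bij_betw ?T (cells shape) {1..sum_list shape}" by (rule bij_betw_syt_of_ssyt[OF P])
  fix m assume m: "m \<in> possible_descents k (sum_list shape) ?T"
  then have range: "m \<in> {1..sum_list shape}" "m + 1 \<in> {1..sum_list shape}"
    by (auto simp: possible_descents_def)
  obtain x where x: "x \<in> cells shape" "?T x = m"
    using bij_betw_imp_surj_on[OF bij] range(1) by (metis imageE)
  obtain y where y: "y \<in> cells shape" "?T y = m + 1"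
    using bij_betw_imp_surj_on[OF bij] range(2) by (metis imageE)
  obtain s i where y_cell: "y = (Suc s, i)" "(i, s) \<in> cells \<beta>"
    using y(1)
  proof (cases rule: cells_shapeE)
    case (first_row j)
    then have "m + 1 \<in> ?T ` first_row k"
      using y(2) unfolding first_row_def by (metis image_eqI lessThan_iff)
    then show ?thesis using m by (simp add: possible_descents_def)
  qed
  text \<open>The first-row cell carrying the entry of y precedes y, hence also x.\<close>
  define z where "z = (0::nat, P (i, s) - 1)"
  have z: "z \<in> cells shape" "cell_key P z = (P (i, s), 0)"
    using SSYT_entry_range[OF P y_cell(2)] by (auto simp: z_def)
  then have "?T z < ?T y" using syt_of_ssyt_less_iff[OF P z(1) y(1)] y_cell by (simp add: less_prod_def)
  then have "?T z \<le> ?T x" using x(2) y(2) by simp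
  then have "cell_key P z \<le> cell_key P x"
    using syt_of_ssyt_less_iff[OF P x(1) z(1)] by (simp add: not_less[symmetric])
  moreover have "cell_key P x < cell_key P y" using syt_of_ssyt_less_iff[OF P x(1) y(1)] x(2) y(2) by simp
  ultimately have "fst x < fst y"
    using z(2) y_cell(1) snd_cell_key[of P x] by (auto simp: less_prod_def less_eq_prod_def)
  moreover have "1 \<le> m" "m < sum_list shape" using range by auto
  ultimately show "m \<in> descents shape ?T"
    unfolding descents_def using x y by (metis (mono_tags, lifting) mem_Collect_eq prod.collapse)
qed

lemma descents_syt_of_ssyt:
  assumes P: "P \<in> SSYT \<beta> k"
  shows "descents shape (syt_of_ssyt \<beta> k P) = possible_descents k (sum_list shape) (syt_of_ssyt \<beta> k P)"
  using descents_subset_possible_descents[OF bij_betw_imp_inj_on[OF bij_betw_syt_of_ssyt[OF P]]]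
    possible_descents_subset_descents_syt_of_ssyt[OF P]
  by (rule antisym)

lemma des_maj_syt_of_ssyt:
  assumes P: "P \<in> SSYT \<beta> k"
  shows "des shape (syt_of_ssyt \<beta> k P) = psize \<beta>"
    and "maj shape (syt_of_ssyt \<beta> k P) = (psize \<beta> + 1 choose 2) + (\<Sum>w\<in>cells \<beta>. P w - 1)"
proof -
  let ?T = "syt_of_ssyt \<beta> k P" and ?b = "psize \<beta>"
  have "des shape ?T = ?b \<and> maj shape ?T = (?b + 1 choose 2) + (\<Sum>w\<in>cells \<beta>. P w - 1)"
  proof (cases "k = 0")
    case True
    then have "\<beta> = []" using length_le by simp
    moreover from this have "descents shape ?T = {}"
      using True by (simp add: descents_def conjugate_def)
    ultimately show ?thesis by (simp add: des_def maj_def psize_def cells_def)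
  next
    case False
    have "?T (0, 0) = Suc (0 + card {w\<in>cells \<beta>. P w \<le> 0})"
      using False by (intro syt_of_ssyt_first_row[OF P]) simp
    also have "{w\<in>cells \<beta>. P w \<le> 0} = {}" using SSYT_entry_range[OF P] by fastforce
    finally have "?T (0, 0) = 1" by simp
    note des_maj = des_maj_eq_possible_descents[OF syt_of_ssyt_SYT[OF P] this descents_syt_of_ssyt[OF P]]
    have first_row_sum: "(\<Sum>j<k. ?T (0, j) - 1) = (\<Sum>j<k. j) + (\<Sum>w\<in>cells \<beta>. k - P w)"
      using syt_of_ssyt_first_row[OF P] sum_card_le_eq_sum_diff[OF finite_cells]
      by (simp add: sum.distrib)
    have entries: "(\<Sum>w\<in>cells \<beta>. k - P w) + (\<Sum>w\<in>cells \<beta>. P w - 1) + ?b = ?b * k"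
      using sum_complement_plus_sum_pred[of "cells \<beta>" P k] SSYT_entry_range[OF P]
      by (simp add: card_cells psize_def)
    have "maj shape ?T + (\<Sum>w\<in>cells \<beta>. k - P w) = ?b * k + (\<Sum>i<?b. i)"
      using des_maj(2) first_row_sum sum_lessThan_add_nat[of k ?b] sum_list_shape by simp
    then show ?thesis
      using des_maj(1) entries sum_lessThan_plus_eq_Suc_choose_two[of ?b] sum_list_conjugate[OF partition]
      by simp
  qed
  then show "des shape ?T = ?b" "maj shape ?T = (?b + 1 choose 2) + (\<Sum>w\<in>cells \<beta>. P w - 1)"
    by simp_all
qed

lemma ssyt_of_syt_syt_of_ssyt:
  assumes P: "P \<in> SSYT \<beta> k"
  shows "ssyt_of_syt \<beta> k (syt_of_ssyt \<beta> k P) = P"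
proof
  fix x :: "nat \<times> nat"
  obtain i s where x: "x = (i, s)" by fastforce
  show "ssyt_of_syt \<beta> k (syt_of_ssyt \<beta> k P) x = P x"
  proof (cases "x \<in> cells \<beta>")
    case False
    then show ?thesis using P x by (simp add: ssyt_of_syt_def SSYT_def)
  next
    case True
    have cell: "(Suc s, i) \<in> cells shape" using True x by simp
    have "{j. j < k \<and> syt_of_ssyt \<beta> k P (0, j) < syt_of_ssyt \<beta> k P (Suc s, i)} = {..<P x}"
    proof (rule set_eqI)
      fix j
      have "j < k \<Longrightarrow> syt_of_ssyt \<beta> k P (0, j) < syt_of_ssyt \<beta> k P (Suc s, i) \<longleftrightarrow> j < P x"
        using syt_of_ssyt_less_iff[OF P _ cell, of "(0, j)"] x by (auto simp: less_prod_def)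
      then show "j \<in> {j. j < k \<and> syt_of_ssyt \<beta> k P (0, j) < syt_of_ssyt \<beta> k P (Suc s, i)} \<longleftrightarrow> j \<in> {..<P x}"
        using SSYT_entry_range[OF P True] by auto
    qed
    then show ?thesis using True x by (simp add: ssyt_of_syt_def)
  qed
qed

lemma descents_max_des:
  assumes "T \<in> SYT shape" "des shape T = psize \<beta>"
  shows "descents shape T = possible_descents k (sum_list shape) T"
  using descents_eq_possible_descents[OF assms(1)] assms(2) sum_list_conjugate[OF partition] by simp

lemma SYT_first_row_less_transposed:
  assumes T: "T \<in> SYT shape" and cell: "(i, s) \<in> cells \<beta>"
  shows "T (0, i) < T (Suc s, i)"
  using cell
proof (induction s)
  case 0
  then show ?case using SYT_col_less_Suc[OF T, of 0 i] by simp
next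
  case (Suc s)
  have "(i, s) \<in> cells \<beta>" using Suc.prems by (auto simp: cells_def)
  then show ?case using Suc.IH SYT_col_less_Suc[OF T, of "Suc s" i] Suc.prems by simp
qed

lemma cell_key_ssyt_of_syt:
  assumes T: "T \<in> SYT shape" and z: "z \<in> cells shape"
  shows "cell_key (ssyt_of_syt \<beta> k T) z = (card {j. j < k \<and> T (0, j) \<le> T z}, fst z)"
  using z
proof (cases rule: cells_shapeE)
  case (first_row c)
  have "{j. j < k \<and> T (0, j) \<le> T (0, c)} = {..c}"
  proof (rule set_eqI)
    fix j
    show "j \<in> {j. j < k \<and> T (0, j) \<le> T (0, c)} \<longleftrightarrow> j \<in> {..c}"
      using SYT_row_less[OF T, of 0 c j] SYT_row_less[OF T, of 0 j c] first_row(2)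
      by (cases j c rule: linorder_cases) auto
  qed
  then show ?thesis using first_row by simp
next
  case (transposed s i)
  have "T (0, j) \<noteq> T z" if "j < k" for j
    using inj_onD[OF SYT_inj_on[OF T], of "(0, j)" z] that z transposed(1) by auto
  then have "{j. j < k \<and> T (0, j) < T z} = {j. j < k \<and> T (0, j) \<le> T z}" by force
  then show ?thesis using transposed by (simp add: ssyt_of_syt_def)
qed

lemma cell_key_ssyt_of_syt_less:
  assumes T: "T \<in> SYT shape" "des shape T = psize \<beta>"
    and x: "x \<in> cells shape" and y: "y \<in> cells shape" and less: "T x < T y"
  shows "cell_key (ssyt_of_syt \<beta> k T) x < cell_key (ssyt_of_syt \<beta> k T) y"
proof -
  let ?A = "\<lambda>z. {j. j < k \<and> T (0, j) \<le> T z}"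
  have sub: "?A x \<subseteq> ?A y" using less by auto
  show ?thesis
  proof (cases "?A x = ?A y")
    case False
    have "finite (?A y)" by (rule finite_subset[of _ "{..<k}"]) auto
    then have "card (?A x) < card (?A y)" using sub False by (intro psubset_card_mono) auto
    then show ?thesis
      using cell_key_ssyt_of_syt[OF T(1) x] cell_key_ssyt_of_syt[OF T(1) y] by (simp add: less_prod_def)
  next
    case True
    text \<open>No first-row label lies in the interval (T x, T y], so the maximal descent set forces
      every step from T x up to T y to go strictly down.\<close>
    have "m \<in> descents shape T" if m: "T x \<le> m" "m < T y" for m
    proof -
      have "m + 1 \<notin> T ` first_row k"
      proof
        assume "m + 1 \<in> T ` first_row k"
        then obtain j where j: "j < k" "T (0, j) = m + 1" by (auto simp: first_row_def)
        then have "j \<in> ?A y" using m by simp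
        then have "j \<in> ?A x" using True by simp
        then show False using j m by simp
      qed
      then show ?thesis
        using m SYT_label_range[OF T(1) x] SYT_label_range[OF T(1) y]
        by (simp add: descents_max_des[OF T] possible_descents_def)
    qed
    then have "fst x < fst y"
      using descent_run_row_less[OF SYT_inj_on[OF T(1)] x y less] by blast
    then show ?thesis
      using cell_key_ssyt_of_syt[OF T(1) x] cell_key_ssyt_of_syt[OF T(1) y] True
      by (simp add: less_prod_def)
  qed
qed

lemma ssyt_of_syt_SSYT:
  assumes T: "T \<in> SYT shape" "des shape T = psize \<beta>"
  shows "ssyt_of_syt \<beta> k T \<in> SSYT \<beta> k"
  unfolding SSYT_def
proof (intro CollectI conjI allI impI ballI)
  fix w assume w: "w \<in> cells \<beta>"
  obtain i s where w_eq: "w = (i, s)" by fastforce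
  have "i \<in> {j. j < k \<and> T (0, j) < T (Suc s, i)}"
    using row_less_k SYT_first_row_less_transposed[OF T(1)] w w_eq by simp
  moreover have "{j. j < k \<and> T (0, j) < T (Suc s, i)} \<subseteq> {..<k}" by auto
  ultimately have "card {j. j < k \<and> T (0, j) < T (Suc s, i)} \<in> {1..k}"
    using card_mono[of "{..<k}"] by (auto simp: Suc_le_eq card_gt_0_iff)
  then show "ssyt_of_syt \<beta> k T w \<in> {1..k}" using w w_eq by (simp add: ssyt_of_syt_def)
next
  fix i j assume cell: "(i, j + 1) \<in> cells \<beta>"
  then have "(i, j) \<in> cells \<beta>" by (auto simp: cells_def)
  then have "cell_key (ssyt_of_syt \<beta> k T) (Suc j, i) < cell_key (ssyt_of_syt \<beta> k T) (Suc (Suc j), i)"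
    using cell_key_ssyt_of_syt_less[OF T, of "(Suc j, i)" "(Suc (Suc j), i)"]
      SYT_col_less_Suc[OF T(1), of "Suc j" i] cell by simp
  then show "ssyt_of_syt \<beta> k T (i, j) \<le> ssyt_of_syt \<beta> k T (i, j + 1)" by (auto simp: less_prod_def)
next
  fix i j assume cell: "(i + 1, j) \<in> cells \<beta>"
  then have "(i, j) \<in> cells \<beta>" using partition_cells_downward_closed[OF partition] by simp
  then have "cell_key (ssyt_of_syt \<beta> k T) (Suc j, i) < cell_key (ssyt_of_syt \<beta> k T) (Suc j, Suc i)"
    using cell_key_ssyt_of_syt_less[OF T, of "(Suc j, i)" "(Suc j, Suc i)"]
      SYT_row_less[OF T(1), of "Suc j" "Suc i" i] cell by simp
  then show "ssyt_of_syt \<beta> k T (i, j) < ssyt_of_syt \<beta> k T (i + 1, j)" by (simp add: less_prod_def)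
next
  fix c assume "c \<notin> cells \<beta>"
  then show "ssyt_of_syt \<beta> k T c = 0" by (simp add: ssyt_of_syt_def)
qed

lemma syt_of_ssyt_ssyt_of_syt:
  assumes T: "T \<in> SYT shape" "des shape T = psize \<beta>"
  shows "syt_of_ssyt \<beta> k (ssyt_of_syt \<beta> k T) = T"
proof
  fix x
  let ?key = "cell_key (ssyt_of_syt \<beta> k T)"
  show "syt_of_ssyt \<beta> k (ssyt_of_syt \<beta> k T) x = T x"
  proof (cases "x \<in> cells shape")
    case False
    then show ?thesis using SYT_outside[OF T(1)] by (simp add: syt_of_ssyt_def)
  next
    case True
    have "?key y < ?key x \<longleftrightarrow> T y < T x" if y: "y \<in> cells shape" for y
    proof (cases "T y < T x")
      case True
      then show ?thesis using cell_key_ssyt_of_syt_less[OF T y \<open>x \<in> cells shape\<close>] by simp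
    next
      case False
      then have "T x < T y \<or> x = y" using inj_onD[OF SYT_inj_on[OF T(1)] _ True y] by force
      then have "\<not> ?key y < ?key x" using cell_key_ssyt_of_syt_less[OF T True y] by auto
      then show ?thesis using False by simp
    qed
    then have "{y\<in>cells shape. ?key y < ?key x} = {y\<in>cells shape. T y < T x}" by blast
    moreover have "card {y\<in>cells shape. T y < T x} = T x - 1"
      using T(1) True by (intro card_less_label) (simp_all add: SYT_def card_cells)
    ultimately show ?thesis
      using True SYT_label_range[OF T(1) True] by (simp add: syt_of_ssyt_def)
  qed
qed

lemma f_des_shape:
  "f_des shape (psize \<beta>) q = q ^ (psize \<beta> + 1 choose 2) * schur \<beta> k (\<lambda>i. q ^ (i - 1))"
proof -
  have "f_des shape (psize \<beta>) q = (\<Sum>P\<in>SSYT \<beta> k. q ^ maj shape (syt_of_ssyt \<beta> k P))"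
    unfolding f_des_def
  proof (rule sum.reindex_bij_witness[symmetric, where i = "ssyt_of_syt \<beta> k" and j = "syt_of_ssyt \<beta> k"])
    fix P assume "P \<in> SSYT \<beta> k"
    then show "ssyt_of_syt \<beta> k (syt_of_ssyt \<beta> k P) = P"
      and "syt_of_ssyt \<beta> k P \<in> {T \<in> SYT shape. des shape T = psize \<beta>}"
      using ssyt_of_syt_syt_of_ssyt syt_of_ssyt_SYT des_maj_syt_of_ssyt(1) by simp_all
  next
    fix T assume "T \<in> {T \<in> SYT shape. des shape T = psize \<beta>}"
    then show "syt_of_ssyt \<beta> k (ssyt_of_syt \<beta> k T) = T" and "ssyt_of_syt \<beta> k T \<in> SSYT \<beta> k"
      using syt_of_ssyt_ssyt_of_syt ssyt_of_syt_SSYT by simp_all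
  qed simp
  also have "\<dots> = (\<Sum>P\<in>SSYT \<beta> k. q ^ (psize \<beta> + 1 choose 2) * (\<Prod>c\<in>cells \<beta>. q ^ (P c - 1)))"
    by (rule sum.cong) (simp_all add: des_maj_syt_of_ssyt(2) power_add power_sum)
  also have "\<dots> = q ^ (psize \<beta> + 1 choose 2) * schur \<beta> k (\<lambda>i. q ^ (i - 1))"
    by (simp add: schur_def sum_distrib_left)
  finally show ?thesis .
qed

end

theorem mainTheorem7:
  fixes \<beta> :: "nat list" and k :: nat and q :: "'a::field"
  assumes "is_partition \<beta>"
    and "length \<beta> \<le> k"
    and "q \<noteq> 0"
  shows "schur \<beta> k (\<lambda>i. q ^ (i - 1))
         = inverse (q ^ ((psize \<beta> + 1) choose 2)) * f_des (k # conjugate \<beta>) (psize \<beta>) q"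
proof -
  interpret bounded_partition \<beta> k using assms(1,2) by unfold_locales
  have "q ^ ((psize \<beta> + 1) choose 2) \<noteq> 0" using assms(3) by simp
  then show ?thesis unfolding f_des_shape by (simp add: field_simps)
qed

end
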